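(* Consider the protocol $P_{RL}$ with parameter $N$ on a directed ring of size $n$ with $2\le n\le N$. Let $C_0\in\mathcal{C}_{NI}$ (defined in the context). Then no new leader is created in any execution starting from $C_0$: for every configuration $D$ reachable from $C_0$ and every $D'$ with $D\to D'$, every agent with $\mathit{leader}=0$ in $D$ has $\mathit{leader}=0$ in $D'$.
   Context: Model. A population is a directed ring of $n\ge 2$ anonymous agents $u_0,\dots,u_{n-1}$ (indices modulo $n$) with arcs $e_i=(u_i,u_{i+1})$. A configuration $C$ assigns a state to each agent; $C\to C'$ means that $C'$ is obtained from $C$ by one interaction on some arc $e_i$, in which initiator $u_i$ and responder $u_{i+1}$ update their states by the transition function and all other agents keep their states. A configuration is reachable from $C$ if it is obtained from $C$ by finitely many (possibly zero) such steps. Protocol $P_{RL}$ (parameter $N$). Each agent has variables $\mathit{leader}\in\{0,1\}$, $\mathit{bullet}\in\{0,1,2\}$, $\mathit{shield}\in\{0,1\}$, $\mathit{signal}\in\{0,1\}$, $\mathit{dist}\in\{0,\dots,N\}$. In an interaction with initiator $l$ and responder $r$ the following are executed in order: 1. If $l.\mathit{leader}=1$ then $l.\mathit{dist}\gets 0$. 2. If $r.\mathit{leader}=1$ then $r.\mathit{dist}\gets 0$; else if $r.\mathit{bullet}=0$ then $r.\mathit{dist}\gets\min(l.\mathit{dist}+1,N)$. 3. If $r.\mathit{dist}=N$ then $r.\mathit{leader}\gets1$, $r.\mathit{bullet}\gets2$, $r.\mathit{shield}\gets1$, $r.\mathit{signal}\gets0$, $r.\mathit{dist}\gets0$. 4.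 If $l.\mathit{leader}=1$ and $l.\mathit{signal}=1$ then $l.\mathit{bullet}\gets2$, $l.\mathit{shield}\gets1$, $l.\mathit{signal}\gets0$. 5. If $r.\mathit{leader}=1$ and $r.\mathit{signal}=1$ then $r.\mathit{bullet}\gets1$, $r.\mathit{shield}\gets0$, $r.\mathit{signal}\gets0$. 6. If $l.\mathit{bullet}>0$ and $r.\mathit{leader}=1$: set $r.\mathit{leader}\gets0$ if ($l.\mathit{bullet}=2$ and $r.\mathit{shield}=0$); then $l.\mathit{bullet}\gets0$. Else, if $l.\mathit{bullet}>0$ and $r.\mathit{leader}=0$: if $r.\mathit{bullet}=0$ then $r.\mathit{bullet}\gets l.\mathit{bullet}$; then $l.\mathit{bullet}\gets0$ and $r.\mathit{signal}\gets0$. 7. $l.\mathit{signal}\gets\max(l.\mathit{signal},r.\mathit{signal},r.\mathit{leader})$. An agent is a leader if $\mathit{leader}=1$ and a follower otherwise. Definitions (in a configuration with at least one leader). $\mathrm{dist}_L(i)=\min\{j\ge0: u_{i-j}.\mathit{leader}=1\}$ and $\mathrm{dist}_R(i)=\min\{j\ge0: u_{i+j}.\mathit{leader}=1\}$. $\mathrm{peaceful}(i)$ holds iff $u_{i-\mathrm{dist}_L(i)}.\mathit{shield}=1$ and $u_{i-j}.\mathit{signal}=0$ for all $0\le j\le\mathrm{dist}_L(i)$. $\mathrm{modest}(i)$ holds iff $\mathrm{peaceful}(i)$ holds and $u_{i-j}.\mathit{dist}\le\mathrm{dist}_L(i-j)$ for all $0\le j\le\mathrm{dist}_L(i)$. $\mathrm{secure}(i)$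 holds iff $u_i.\mathit{dist}=0$ when $u_i.\mathit{leader}=1$, and $u_i.\mathit{dist}\le N-\mathrm{dist}_R(i)$ when $u_i.\mathit{leader}=0$. $\mathcal{C}_{PB}$ is the set of configurations with at least one leader in which every $u_j$ with $u_j.\mathit{bullet}=2$ satisfies $\mathrm{peaceful}(j)$. $\mathcal{C}_{NI}$ is the set of configurations in $\mathcal{C}_{PB}$ in which every agent $u_i$ satisfies $\mathrm{secure}(i)$ and every $u_j$ with $u_j.\mathit{bullet}=2$ satisfies $\mathrm{modest}(j)$. *)

theory Defs
  imports Main
begin

record agent =
  leader :: nat
  bullet :: nat
  shield :: nat
  signal :: nat
  dist   :: nat

definition valid_state :: "nat \<Rightarrow> agent \<Rightarrow> bool" where
  "valid_state N s \<longleftrightarrow> leader s \<le> 1 \<and> bullet s \<le> 2 \<and> shield s \<le> 1 \<and> signal s \<le> 1 \<and> dist s \<le> N"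

text \<open>Transition function: initiator l, responder r; steps 1--7 executed in order.\<close>

definition prl_trans :: "nat \<Rightarrow> agent \<Rightarrow> agent \<Rightarrow> agent \<times> agent" where
  "prl_trans N l r = (let
     l1 = (if leader l = 1 then l\<lparr>dist := 0\<rparr> else l);
     r1 = (if leader r = 1 then r\<lparr>dist := 0\<rparr>
           else if bullet r = 0 then r\<lparr>dist := min (dist l1 + 1) N\<rparr> else r);
     r2 = (if dist r1 = N
           then r1\<lparr>leader := 1, bullet := 2, shield := 1, signal := 0, dist := 0\<rparr> else r1);
     l2 = (if leader l1 = 1 \<and> signal l1 = 1
           then l1\<lparr>bullet := 2, shield := 1, signal := 0\<rparr> else l1);
     r3 = (if leader r2 = 1 \<and> signal r2 = 1
           then r2\<lparr>bullet := 1, shield := 0, signal := 0\<rparr> else r2);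
     lr = (if 0 < bullet l2 \<and> leader r3 = 1 then
             (l2\<lparr>bullet := 0\<rparr>,
              if bullet l2 = 2 \<and> shield r3 = 0 then r3\<lparr>leader := 0\<rparr> else r3)
           else if 0 < bullet l2 \<and> leader r3 = 0 then
             (l2\<lparr>bullet := 0\<rparr>,
              (if bullet r3 = 0 then r3\<lparr>bullet := bullet l2\<rparr> else r3)\<lparr>signal := 0\<rparr>)
           else (l2, r3));
     l3 = fst lr; r4 = snd lr;
     l4 = l3\<lparr>signal := max (signal l3) (max (signal r4) (leader r4))\<rparr>
   in (l4, r4))"

text \<open>Configurations on a directed ring of n agents u_0..u_{n-1}: C i is the state of u_i
  for i < n (values at i >= n are irrelevant).\<close>

type_synonym config = "nat \<Rightarrow> agent"

definition valid_config :: "nat \<Rightarrow> nat \<Rightarrow> config \<Rightarrow> bool" where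
  "valid_config n N C \<longleftrightarrow> (\<forall>i<n. valid_state N (C i))"

definition step :: "nat \<Rightarrow> nat \<Rightarrow> config \<Rightarrow> config \<Rightarrow> bool" where
  "step n N C C' \<longleftrightarrow> (\<exists>i<n.
     C' = (C(i := fst (prl_trans N (C i) (C (Suc i mod n))),
             Suc i mod n := snd (prl_trans N (C i) (C (Suc i mod n))))))"

definition reachable :: "nat \<Rightarrow> nat \<Rightarrow> config \<Rightarrow> config \<Rightarrow> bool" where
  "reachable n N C D \<longleftrightarrow> (step n N)\<^sup>*\<^sup>* C D"

definition ag :: "nat \<Rightarrow> config \<Rightarrow> int \<Rightarrow> agent" where
  "ag n C k = C (nat (k mod int n))"

definition distL :: "nat \<Rightarrow> config \<Rightarrow> int \<Rightarrow> nat" where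
  "distL n C i = (LEAST j::nat. leader (ag n C (i - int j)) = 1)"

definition distR :: "nat \<Rightarrow> config \<Rightarrow> int \<Rightarrow> nat" where
  "distR n C i = (LEAST j::nat. leader (ag n C (i + int j)) = 1)"

definition peaceful :: "nat \<Rightarrow> config \<Rightarrow> int \<Rightarrow> bool" where
  "peaceful n C i \<longleftrightarrow>
     shield (ag n C (i - int (distL n C i))) = 1 \<and>
     (\<forall>j\<le>distL n C i. signal (ag n C (i - int j)) = 0)"

definition modest :: "nat \<Rightarrow> config \<Rightarrow> int \<Rightarrow> bool" where
  "modest n C i \<longleftrightarrow> peaceful n C i \<and>
     (\<forall>j\<le>distL n C i. dist (ag n C (i - int j)) \<le> distL n C (i - int j))"

definition secure :: "nat \<Rightarrow> nat \<Rightarrow> config \<Rightarrow> int \<Rightarrow> bool" where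
  "secure n N C i \<longleftrightarrow>
     (leader (ag n C i) = 1 \<longrightarrow> dist (ag n C i) = 0) \<and>
     (leader (ag n C i) = 0 \<longrightarrow> int (dist (ag n C i)) \<le> int N - int (distR n C i))"

definition C_PB :: "nat \<Rightarrow> config \<Rightarrow> bool" where
  "C_PB n C \<longleftrightarrow> (\<exists>i<n. leader (C i) = 1) \<and>
     (\<forall>j<n. bullet (C j) = 2 \<longrightarrow> peaceful n C (int j))"

definition C_NI :: "nat \<Rightarrow> nat \<Rightarrow> config \<Rightarrow> bool" where
  "C_NI n N C \<longleftrightarrow> C_PB n C \<and> (\<forall>i<n. secure n N C (int i)) \<and>
     (\<forall>j<n. bullet (C j) = 2 \<longrightarrow> modest n C (int j))"

end

theory Submission
  imports Defs
begin

text \<open>An interaction creates a leader only in step 3, when the responder's dist reaches N.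
  If every agent is secure this cannot happen: a follower's dist is at most N minus its
  distance to the next leader on the right, which is positive for the responder and one larger
  for the initiator. It therefore suffices that the invariant "all states valid, some leader,
  every agent secure, every bullet 2 modest" is preserved by each interaction. The decisive
  case is a leader shot by a bullet 2: that bullet is modest, so the segment behind it,
  including the leader that fired it, is left intact. Hence some leader survives, a follower
  whose next leader was shot is bounded by its distance to the surviving leader, and modesty
  travels with the bullet when it moves on to the responder.\<close>

section \<open>The transition function in seven steps\<close>

definition prl_step1 :: "agent \<Rightarrow> agent" where
  "prl_step1 l = (if leader l = 1 then l\<lparr>dist := 0\<rparr> else l)"

definition prl_step2 :: "nat \<Rightarrow> agent \<Rightarrow> agent \<Rightarrow> agent" where
  "prl_step2 N l1 r = (if leader r = 1 then r\<lparr>dist := 0\<rparr>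
     else if bullet r = 0 then r\<lparr>dist := min (dist l1 + 1) N\<rparr> else r)"

definition prl_step3 :: "nat \<Rightarrow> agent \<Rightarrow> agent" where
  "prl_step3 N r1 = (if dist r1 = N
     then r1\<lparr>leader := 1, bullet := 2, shield := 1, signal := 0, dist := 0\<rparr> else r1)"

definition prl_step4 :: "agent \<Rightarrow> agent" where
  "prl_step4 l1 = (if leader l1 = 1 \<and> signal l1 = 1
     then l1\<lparr>bullet := 2, shield := 1, signal := 0\<rparr> else l1)"

definition prl_step5 :: "agent \<Rightarrow> agent" where
  "prl_step5 r2 = (if leader r2 = 1 \<and> signal r2 = 1
     then r2\<lparr>bullet := 1, shield := 0, signal := 0\<rparr> else r2)"

definition prl_step6 :: "agent \<Rightarrow> agent \<Rightarrow> agent \<times> agent" where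
  "prl_step6 l2 r3 = (if 0 < bullet l2 \<and> leader r3 = 1 then
       (l2\<lparr>bullet := 0\<rparr>, if bullet l2 = 2 \<and> shield r3 = 0 then r3\<lparr>leader := 0\<rparr> else r3)
     else if 0 < bullet l2 \<and> leader r3 = 0 then
       (l2\<lparr>bullet := 0\<rparr>, (if bullet r3 = 0 then r3\<lparr>bullet := bullet l2\<rparr> else r3)\<lparr>signal := 0\<rparr>)
     else (l2, r3))"

definition prl_step7 :: "agent \<Rightarrow> agent \<Rightarrow> agent" where
  "prl_step7 l3 r4 = l3\<lparr>signal := max (signal l3) (max (signal r4) (leader r4))\<rparr>"

lemma prl_trans_steps:
  "prl_trans N l r = (let l1 = prl_step1 l; r2 = prl_step3 N (prl_step2 N l1 r);
     lr = prl_step6 (prl_step4 l1) (prl_step5 r2) in (prl_step7 (fst lr) (snd lr), snd lr))"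
  unfolding prl_trans_def prl_step1_def prl_step2_def prl_step3_def prl_step4_def prl_step5_def
    prl_step6_def prl_step7_def Let_def ..

lemma prl_step_fields [simp]:
  "leader (prl_step1 l) = leader l" "bullet (prl_step1 l) = bullet l"
  "shield (prl_step1 l) = shield l" "signal (prl_step1 l) = signal l"
  "dist (prl_step1 l) = (if leader l = 1 then 0 else dist l)"
  "leader (prl_step2 N l r) = leader r" "bullet (prl_step2 N l r) = bullet r"
  "shield (prl_step2 N l r) = shield r" "signal (prl_step2 N l r) = signal r"
  "dist (prl_step2 N l r) =
     (if leader r = 1 then 0 else if bullet r = 0 then min (dist l + 1) N else dist r)"
  "leader (prl_step4 l) = leader l" "dist (prl_step4 l) = dist l"
  "bullet (prl_step4 l) = (if leader l = 1 \<and> signal l = 1 then 2 else bullet l)"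
  "shield (prl_step4 l) = (if leader l = 1 \<and> signal l = 1 then 1 else shield l)"
  "signal (prl_step4 l) = (if leader l = 1 \<and> signal l = 1 then 0 else signal l)"
  "leader (prl_step5 r) = leader r" "dist (prl_step5 r) = dist r"
  "bullet (prl_step5 r) = (if leader r = 1 \<and> signal r = 1 then 1 else bullet r)"
  "shield (prl_step5 r) = (if leader r = 1 \<and> signal r = 1 then 0 else shield r)"
  "signal (prl_step5 r) = (if leader r = 1 \<and> signal r = 1 then 0 else signal r)"
  "leader (fst (prl_step6 l r)) = leader l" "shield (fst (prl_step6 l r)) = shield l"
  "signal (fst (prl_step6 l r)) = signal l" "dist (fst (prl_step6 l r)) = dist l"
  "leader (snd (prl_step6 l r)) =
     (if leader r = 1 \<and> bullet l = 2 \<and> shield r = 0 then 0 else leader r)"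
  "bullet (snd (prl_step6 l r)) =
     (if 0 < bullet l \<and> leader r = 0 \<and> bullet r = 0 then bullet l else bullet r)"
  "signal (snd (prl_step6 l r)) =
     (if 0 < bullet l \<and> leader r = 0 then 0 else signal r)"
  "shield (snd (prl_step6 l r)) = shield r" "dist (snd (prl_step6 l r)) = dist r"
  "leader (prl_step7 l r) = leader l" "bullet (prl_step7 l r) = bullet l"
  "shield (prl_step7 l r) = shield l" "dist (prl_step7 l r) = dist l"
  "signal (prl_step7 l r) = max (signal l) (max (signal r) (leader r))"
  by (simp_all add: prl_step1_def prl_step2_def prl_step4_def prl_step5_def prl_step6_def
    prl_step7_def)

lemma prl_step3_id: "dist r \<noteq> N \<Longrightarrow> prl_step3 N r = r"
  by (simp add: prl_step3_def)

lemma prl_step6_bullet: "leader r \<le> 1 \<Longrightarrow> bullet (fst (prl_step6 l r)) = 0"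
  by (simp add: prl_step6_def)

text \<open>The responder's dist after steps 1 and 2; step 3 turns the responder into a leader
  exactly when this value is N.\<close>

definition responder_dist :: "nat \<Rightarrow> agent \<Rightarrow> agent \<Rightarrow> nat" where
  "responder_dist N l r = (if leader r = 1 then 0 else if bullet r = 0
     then min ((if leader l = 1 then 0 else dist l) + 1) N else dist r)"

definition fired_bullet :: "agent \<Rightarrow> nat" where
  "fired_bullet l = (if leader l = 1 \<and> signal l = 1 then 2 else bullet l)"

lemma responder_dist_step2: "responder_dist N l r = dist (prl_step2 N (prl_step1 l) r)"
  by (simp add: responder_dist_def)

lemma prl_trans_initiator:
  "leader (fst (prl_trans N l r)) = leader l"
  "dist (fst (prl_trans N l r)) = (if leader l = 1 then 0 else dist l)"
  "shield (fst (prl_trans N l r)) = (if leader l = 1 \<and> signal l = 1 then 1 else shield l)"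
  "signal (fst (prl_trans N l r)) = max (if leader l = 1 \<and> signal l = 1 then 0 else signal l)
     (max (signal (snd (prl_trans N l r))) (leader (snd (prl_trans N l r))))"
  by (simp_all add: prl_trans_steps Let_def)

lemma prl_trans_initiator_bullet:
  "leader r \<le> 1 \<Longrightarrow> responder_dist N l r \<noteq> N \<Longrightarrow> bullet (fst (prl_trans N l r)) = 0"
  by (simp add: prl_trans_steps Let_def responder_dist_step2 prl_step3_id prl_step6_bullet)

lemma prl_trans_responder:
  assumes "valid_state N l" "valid_state N r" "responder_dist N l r \<noteq> N"
  shows
    "leader (snd (prl_trans N l r)) = (if leader r = 1 \<and> fired_bullet l = 2
       \<and> (if signal r = 1 then 0 else shield r) = 0 then 0 else leader r)"
    "dist (snd (prl_trans N l r)) = responder_dist N l r"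
    "bullet (snd (prl_trans N l r)) = (if leader r = 1 then (if signal r = 1 then 1 else bullet r)
       else if bullet r = 0 then fired_bullet l else bullet r)"
    "shield (snd (prl_trans N l r)) = (if leader r = 1 \<and> signal r = 1 then 0 else shield r)"
    "signal (snd (prl_trans N l r)) = (if leader r = 1 \<or> fired_bullet l > 0 then 0 else signal r)"
  using assms unfolding responder_dist_step2 valid_state_def
  by (auto simp: prl_trans_steps Let_def prl_step3_id fired_bullet_def)

lemma valid_state_prl_trans:
  assumes "valid_state N l" "valid_state N r" "responder_dist N l r \<noteq> N"
  shows "valid_state N (fst (prl_trans N l r))" "valid_state N (snd (prl_trans N l r))"
  using assms prl_trans_initiator_bullet[of r N l] unfolding responder_dist_step2 valid_state_def
  by (auto simp: prl_trans_steps Let_def prl_step3_id)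

lemma fired_bullet_2: "fired_bullet l = 2 \<Longrightarrow> leader l = 1 \<or> bullet l = 2"
  by (auto simp: fired_bullet_def split: if_splits)

lemma valid_state_leader_eq_0: "valid_state N s \<Longrightarrow> leader s \<noteq> 1 \<Longrightarrow> leader s = 0"
  by (simp add: valid_state_def)

lemma valid_state_signal_eq_0: "valid_state N s \<Longrightarrow> signal s \<noteq> 1 \<Longrightarrow> signal s = 0"
  by (simp add: valid_state_def)

section \<open>Leaders and distances on the ring\<close>

lemma ag_mod_cong: "k mod int n = k' mod int n \<Longrightarrow> ag n C k = ag n C k'"
  by (simp add: ag_def)

lemma ag_of_nat: "i < n \<Longrightarrow> ag n C (int i) = C i"
  by (simp add: ag_def)

lemma valid_state_ag: "valid_config n N C \<Longrightarrow> 0 < n \<Longrightarrow> valid_state N (ag n C k)"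
  unfolding valid_config_def ag_def by (simp add: nat_less_iff)

definition has_leader :: "nat \<Rightarrow> config \<Rightarrow> bool" where
  "has_leader n C \<longleftrightarrow> (\<exists>i<n. leader (C i) = 1)"

lemma has_leaderI: "0 < n \<Longrightarrow> leader (ag n C k) = 1 \<Longrightarrow> has_leader n C"
proof -
  assume "0 < n" "leader (ag n C k) = 1"
  moreover have "nat (k mod int n) < n" using \<open>0 < n\<close> by (simp add: nat_less_iff)
  ultimately show ?thesis unfolding has_leader_def ag_def by blast
qed

lemma ex_leader_left:
  assumes "has_leader n C" shows "\<exists>j<n. leader (ag n C (k - int j)) = 1"
proof -
  obtain i where i: "i < n" "leader (C i) = 1" using assms by (auto simp: has_leader_def)
  define j where "j = nat ((k - int i) mod int n)"
  have "int j = (k - int i) mod int n" using i(1) by (simp add: j_def)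
  then have "(k - int j) mod int n = int i mod int n" by (simp add: mod_diff_right_eq)
  then have "ag n C (k - int j) = C i" using ag_mod_cong ag_of_nat[OF i(1)] by metis
  moreover have "j < n" using i(1) by (simp add: j_def nat_less_iff)
  ultimately show ?thesis using i(2) by auto
qed

lemma ex_leader_right:
  assumes "has_leader n C" shows "\<exists>j<n. leader (ag n C (k + int j)) = 1"
proof -
  obtain i where i: "i < n" "leader (C i) = 1" using assms by (auto simp: has_leader_def)
  define j where "j = nat ((int i - k) mod int n)"
  have "int j = (int i - k) mod int n" using i(1) by (simp add: j_def)
  then have "(k + int j) mod int n = int i mod int n" by (simp add: mod_add_right_eq)
  then have "ag n C (k + int j) = C i" using ag_mod_cong ag_of_nat[OF i(1)] by metis
  moreover have "j < n" using i(1) by (simp add: j_def nat_less_iff)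
  ultimately show ?thesis using i(2) by auto
qed

lemma distL_le: "leader (ag n C (k - int j)) = 1 \<Longrightarrow> distL n C k \<le> j"
  unfolding distL_def by (rule Least_le)

lemma distR_le: "leader (ag n C (k + int j)) = 1 \<Longrightarrow> distR n C k \<le> j"
  unfolding distR_def by (rule Least_le)

lemma not_leader_below_distL: "j < distL n C k \<Longrightarrow> leader (ag n C (k - int j)) \<noteq> 1"
  unfolding distL_def by (rule not_less_Least)

lemma not_leader_below_distR: "j < distR n C k \<Longrightarrow> leader (ag n C (k + int j)) \<noteq> 1"
  unfolding distR_def by (rule not_less_Least)

lemma leader_at_distL: "has_leader n C \<Longrightarrow> leader (ag n C (k - int (distL n C k))) = 1"
proof -
  assume "has_leader n C"
  then obtain j where "leader (ag n C (k - int j)) = 1" using ex_leader_left by blast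
  then show ?thesis unfolding distL_def by (rule LeastI)
qed

lemma leader_at_distR: "has_leader n C \<Longrightarrow> leader (ag n C (k + int (distR n C k))) = 1"
proof -
  assume "has_leader n C"
  then obtain j where "leader (ag n C (k + int j)) = 1" using ex_leader_right by blast
  then show ?thesis unfolding distR_def by (rule LeastI)
qed

lemma distL_less: "has_leader n C \<Longrightarrow> distL n C k < n"
proof -
  assume "has_leader n C"
  then obtain j where "j < n" "leader (ag n C (k - int j)) = 1" using ex_leader_left by blast
  then show ?thesis using distL_le[of n C k j] by linarith
qed

lemma distR_less: "has_leader n C \<Longrightarrow> distR n C k < n"
proof -
  assume "has_leader n C"
  then obtain j where "j < n" "leader (ag n C (k + int j)) = 1" using ex_leader_right by blast
  then show ?thesis using distR_le[of n C k j] by linarith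
qed

lemma distL_eqI:
  "leader (ag n C (k - int e)) = 1 \<Longrightarrow> (\<And>j. j < e \<Longrightarrow> leader (ag n C (k - int j)) \<noteq> 1)
   \<Longrightarrow> distL n C k = e"
  unfolding distL_def by (rule Least_equality) (auto simp: not_less[symmetric])

lemma distR_eqI:
  "leader (ag n C (k + int e)) = 1 \<Longrightarrow> (\<And>j. j < e \<Longrightarrow> leader (ag n C (k + int j)) \<noteq> 1)
   \<Longrightarrow> distR n C k = e"
  unfolding distR_def by (rule Least_equality) (auto simp: not_less[symmetric])

lemma distL_diff:
  assumes "has_leader n C" "j \<le> distL n C k"
  shows "distL n C (k - int j) = distL n C k - j"
proof (rule distL_eqI)
  show "leader (ag n C (k - int j - int (distL n C k - j))) = 1"
    using leader_at_distL[OF assms(1), of k] assms(2) by (simp add: of_nat_diff algebra_simps)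
  fix i assume "i < distL n C k - j"
  then have "i + j < distL n C k" by simp
  from not_leader_below_distL[OF this]
  show "leader (ag n C (k - int j - int i)) \<noteq> 1" by (simp add: algebra_simps)
qed

lemma distL_Suc:
  assumes "has_leader n C" "leader (ag n C k) \<noteq> 1"
  shows "distL n C k = Suc (distL n C (k - 1))"
proof -
  have "distL n C k \<noteq> 0"
  proof
    assume "distL n C k = 0"
    then show False using leader_at_distL[OF assms(1), of k] assms(2) by simp
  qed
  then show ?thesis using distL_diff[OF assms(1), of 1 k] by simp
qed

lemma distR_Suc:
  assumes "has_leader n C" "leader (ag n C k) \<noteq> 1"
  shows "distR n C k = Suc (distR n C (k + 1))"
proof (rule distR_eqI)
  show "leader (ag n C (k + int (Suc (distR n C (k + 1))))) = 1"
    using leader_at_distR[OF assms(1), of "k + 1"] by (simp add: algebra_simps)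
  fix j assume j: "j < Suc (distR n C (k + 1))"
  show "leader (ag n C (k + int j)) \<noteq> 1"
  proof (cases j)
    case 0
    then show ?thesis using assms(2) by simp
  next
    case (Suc i)
    then have "i < distR n C (k + 1)" using j by simp
    from not_leader_below_distR[OF this] show ?thesis using Suc by (simp add: algebra_simps)
  qed
qed

lemma distR_le_distL_before_leader:
  assumes "has_leader n C"
  shows "distR n C p \<le> distL n C (p + int (distR n C p - 1))"
proof -
  define d where "d = distR n C p"
  define e where "e = distL n C (p + int (d - 1))"
  have "\<not> e < d"
  proof
    assume "e < d"
    then have "d - 1 - e < distR n C p" using d_def by simp
    then have "leader (ag n C (p + int (d - 1 - e))) \<noteq> 1" by (rule not_leader_below_distR)
    moreover have "p + int (d - 1 - e) = p + int (d - 1) - int e" using \<open>e < d\<close> by simp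
    ultimately have "leader (ag n C (p + int (d - 1) - int e)) \<noteq> 1" by metis
    then show False using leader_at_distL[OF assms(1), of "p + int (d - 1)"] e_def by simp
  qed
  then show ?thesis unfolding d_def e_def by simp
qed

lemma distR_cong_leaders:
  "(\<And>k. leader (ag n D k) = 1 \<longleftrightarrow> leader (ag n C k) = 1) \<Longrightarrow> distR n D = distR n C"
  by (simp add: distR_def fun_eq_iff)

lemma distL_mod_cong: "k mod int n = k' mod int n \<Longrightarrow> distL n C k = distL n C k'"
proof -
  assume k: "k mod int n = k' mod int n"
  have "ag n C (k - int j) = ag n C (k' - int j)" for j
    by (rule ag_mod_cong, rule mod_diff_cong[OF k]) simp
  then show ?thesis unfolding distL_def by simp
qed

lemma distR_mod_cong: "k mod int n = k' mod int n \<Longrightarrow> distR n C k = distR n C k'"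
proof -
  assume k: "k mod int n = k' mod int n"
  have "ag n C (k + int j) = ag n C (k' + int j)" for j
    by (rule ag_mod_cong, rule mod_add_cong[OF k]) simp
  then show ?thesis unfolding distR_def by simp
qed

lemma secure_leader: "secure n N C k \<Longrightarrow> leader (ag n C k) = 1 \<Longrightarrow> dist (ag n C k) = 0"
  by (simp add: secure_def)

lemma secure_follower:
  "secure n N C k \<Longrightarrow> leader (ag n C k) = 0 \<Longrightarrow> dist (ag n C k) + distR n C k \<le> N"
  unfolding secure_def by auto

lemma secure_mod_cong: "k mod int n = k' mod int n \<Longrightarrow> secure n N C k = secure n N C k'"
  unfolding secure_def using ag_mod_cong[of k n k' C] distR_mod_cong[of k n k' C] by simp

lemma modest_shield: "modest n C k \<Longrightarrow> shield (ag n C (k - int (distL n C k))) = 1"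
  by (simp add: modest_def peaceful_def)

lemma modest_signal: "modest n C k \<Longrightarrow> j \<le> distL n C k \<Longrightarrow> signal (ag n C (k - int j)) = 0"
  by (simp add: modest_def peaceful_def)

lemma modest_dist:
  "modest n C k \<Longrightarrow> has_leader n C \<Longrightarrow> j \<le> distL n C k
   \<Longrightarrow> dist (ag n C (k - int j)) \<le> distL n C k - j"
  using distL_diff by (simp add: modest_def)

lemma modest_at_leader:
  assumes "leader (ag n C k) = 1"
  shows "modest n C k \<longleftrightarrow>
    shield (ag n C k) = 1 \<and> signal (ag n C k) = 0 \<and> dist (ag n C k) = 0"
proof -
  have "distL n C k = 0" using distL_le[of n C k 0] assms by simp
  then show ?thesis unfolding modest_def peaceful_def by simp
qed

lemma modest_extend:
  assumes "has_leader n C" "modest n C (k - 1)" "leader (ag n C k) \<noteq> 1"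
    and "signal (ag n C k) = 0" "dist (ag n C k) \<le> distL n C (k - 1) + 1"
  shows "modest n C k"
proof -
  have dL: "distL n C k = Suc (distL n C (k - 1))" using distL_Suc assms(1,3) .
  have pred: "k - int (Suc i) = k - 1 - int i" for i by simp
  show ?thesis unfolding modest_def peaceful_def dL
  proof (intro conjI allI impI)
    show "shield (ag n C (k - int (Suc (distL n C (k - 1))))) = 1"
      using modest_shield[OF assms(2)] by (simp only: pred)
    fix j assume j: "j \<le> Suc (distL n C (k - 1))"
    show "signal (ag n C (k - int j)) = 0"
    proof (cases j)
      case 0
      then show ?thesis using assms(4) by simp
    next
      case (Suc i)
      then show ?thesis using modest_signal[OF assms(2), of i] j unfolding Suc pred by simp
    qed
  next
    fix j assume j: "j \<le> Suc (distL n C (k - 1))"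
    show "dist (ag n C (k - int j)) \<le> distL n C (k - int j)"
    proof (cases j)
      case 0
      then show ?thesis using assms(5) dL by simp
    next
      case (Suc i)
      then show ?thesis using assms(2) j unfolding modest_def Suc pred by simp
    qed
  qed
qed

lemma modest_mod_cong: "k mod int n = k' mod int n \<Longrightarrow> modest n C k = modest n C k'"
proof -
  assume k: "k mod int n = k' mod int n"
  have "(k - int j) mod int n = (k' - int j) mod int n" for j using k by (rule mod_diff_cong) simp
  then have "ag n C (k - int j) = ag n C (k' - int j)" "distL n C (k - int j) = distL n C (k' - int j)"
    for j by (rule ag_mod_cong, rule distL_mod_cong)
  moreover have "distL n C k = distL n C k'" using k by (rule distL_mod_cong)
  ultimately show ?thesis unfolding modest_def peaceful_def by simp
qed

section \<open>One interaction preserves the invariant\<close>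

text \<open>Validity together with C_NI; the conditions of C_NI depend only on the position modulo n
  and are imposed here at every integer position.\<close>

definition ni_invariant :: "nat \<Rightarrow> nat \<Rightarrow> config \<Rightarrow> bool" where
  "ni_invariant n N C \<longleftrightarrow> valid_config n N C \<and> has_leader n C \<and> (\<forall>k. secure n N C k) \<and>
     (\<forall>k. bullet (ag n C k) = 2 \<longrightarrow> modest n C k)"

locale interaction =
  fixes n N :: nat and C :: config and a :: nat
  assumes two_le_n: "2 \<le> n" and n_le_N: "n \<le> N" and a_less_n: "a < n"
    and invariant: "ni_invariant n N C"
begin

definition "b = Suc a mod n"
definition "ini = C a"
definition "res = C b"
definition "ini' = fst (prl_trans N ini res)"
definition "res' = snd (prl_trans N ini res)"
definition "D = C(a := ini', b := res')"
definition "at_ini p \<longleftrightarrow> p mod int n = int a"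
definition "at_res p \<longleftrightarrow> p mod int n = (int a + 1) mod int n"

lemma n_pos: "0 < n"
  using two_le_n by simp

lemma valid_C: "valid_state N (ag n C p)"
  using invariant valid_state_ag n_pos unfolding ni_invariant_def by blast

lemma has_leader_C: "has_leader n C"
  using invariant unfolding ni_invariant_def by blast

lemma secure_C: "secure n N C p"
  using invariant unfolding ni_invariant_def by blast

lemma modest_C: "bullet (ag n C p) = 2 \<Longrightarrow> modest n C p"
  using invariant unfolding ni_invariant_def by blast

lemma int_b: "int b = (int a + 1) mod int n"
  unfolding b_def by (simp add: of_nat_mod add.commute)

lemma a_neq_b: "a \<noteq> b"
proof (cases "Suc a < n")
  case True
  then show ?thesis by (simp add: b_def)
next
  case False
  then have "Suc a = n" using a_less_n by simp
  then show ?thesis using two_le_n by (simp add: b_def)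
qed

lemma not_at_ini_and_res: "\<not> (at_ini p \<and> at_res p)"
  using a_neq_b unfolding at_ini_def at_res_def int_b[symmetric] by simp

lemma at_ini_a: "at_ini (int a)"
  using a_less_n by (simp add: at_ini_def)

lemma at_res_succ: "at_ini p \<Longrightarrow> at_res (p + 1)"
  unfolding at_ini_def at_res_def by (metis mod_add_left_eq)

lemma at_ini_pred: "at_res p \<Longrightarrow> at_ini (p - 1)"
  using at_ini_a unfolding at_ini_def at_res_def by (metis add_diff_cancel_right' mod_diff_left_eq)

lemma ag_C_ini: "at_ini p \<Longrightarrow> ag n C p = ini"
  by (simp add: at_ini_def ag_def ini_def)

lemma ag_C_res: "at_res p \<Longrightarrow> ag n C p = res"
  by (simp add: at_res_def ag_def res_def int_b[symmetric])

lemma ag_D: "ag n D p = (if at_ini p then ini' else if at_res p then res' else ag n C p)"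
proof -
  have "at_ini p \<longleftrightarrow> nat (p mod int n) = a" "at_res p \<longleftrightarrow> nat (p mod int n) = b"
    using n_pos unfolding at_ini_def at_res_def int_b[symmetric] by (auto simp: nat_eq_iff)
  then show ?thesis using a_neq_b unfolding ag_def D_def by auto
qed

lemma ag_D_ini: "at_ini p \<Longrightarrow> ag n D p = ini'"
  by (simp add: ag_D)

lemma ag_D_res: "at_res p \<Longrightarrow> ag n D p = res'"
  using not_at_ini_and_res by (auto simp: ag_D)

lemma ag_D_other: "\<not> at_ini p \<Longrightarrow> \<not> at_res p \<Longrightarrow> ag n D p = ag n C p"
  by (simp add: ag_D)

lemma valid_ini: "valid_state N ini"
  using valid_C ag_C_ini[OF at_ini_a] by metis

lemma valid_res: "valid_state N res"
  using valid_C ag_C_res[OF at_res_succ[OF at_ini_a]] by metis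

text \<open>Security of the initiator and the responder keeps the responder's dist below N,
  so step 3 never fires.\<close>

lemma no_creation: "responder_dist N ini res \<noteq> N"
proof (cases "leader res = 1")
  case True
  then show ?thesis using n_le_N two_le_n by (simp add: responder_dist_def)
next
  case res_follower: False
  let ?r = "int a + 1"
  have res_at: "ag n C ?r = res" using ag_C_res[OF at_res_succ[OF at_ini_a]] .
  have "leader (ag n C ?r) = 0" using res_at res_follower valid_res valid_state_leader_eq_0 by simp
  then have res_secure: "dist res + distR n C ?r \<le> N" using secure_follower secure_C res_at by metis
  have distR_r: "distR n C ?r = Suc (distR n C (?r + 1))"
    using distR_Suc has_leader_C res_at res_follower by metis
  show ?thesis
  proof (cases "bullet res = 0 \<and> leader ini \<noteq> 1")
    case False
    then show ?thesis using res_secure distR_r two_le_n n_le_N res_follower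
      by (auto simp: responder_dist_def)
  next
    case True
    have ini_at: "ag n C (int a) = ini" using ag_C_ini[OF at_ini_a] .
    have "leader (ag n C (int a)) = 0" using ini_at True valid_ini valid_state_leader_eq_0 by simp
    then have "dist ini + distR n C (int a) \<le> N" using secure_follower secure_C ini_at by metis
    moreover have "distR n C (int a) = Suc (distR n C ?r)"
      using distR_Suc has_leader_C ini_at True by metis
    ultimately show ?thesis using True distR_r res_follower by (simp add: responder_dist_def)
  qed
qed

lemmas ini'_fields = prl_trans_initiator[of N ini res, folded ini'_def res'_def]

lemmas res'_fields = prl_trans_responder[OF valid_ini valid_res no_creation, folded res'_def]

lemma bullet_ini': "bullet ini' = 0"
  using valid_res no_creation prl_trans_initiator_bullet unfolding ini'_def valid_state_def by blast

lemma valid_state_ag_D: "valid_state N (ag n D p)"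
  using valid_state_prl_trans[OF valid_ini valid_res no_creation] valid_C
  by (simp add: ag_D ini'_def res'_def)

lemma leader_res'_imp: "leader res' = 1 \<Longrightarrow> leader res = 1"
  using res'_fields(1) by (auto split: if_splits)

lemma leader_res'_follower: "leader res \<noteq> 1 \<Longrightarrow> leader res' = leader res"
  using res'_fields(1) by auto

lemma fired_if_killed: "leader res = 1 \<Longrightarrow> leader res' \<noteq> 1 \<Longrightarrow> fired_bullet ini = 2"
  using res'_fields(1) by (auto split: if_splits)

lemma signal_ini'_zero:
  assumes "leader res \<noteq> 1" "signal res' = 0" "leader ini = 1 \<or> signal ini = 0"
  shows "signal ini' = 0"
proof -
  have "leader res' = 0"
    using assms(1) leader_res'_follower valid_res valid_state_leader_eq_0 by simp
  moreover have "leader ini = 1 \<longrightarrow> signal ini \<noteq> 1 \<longrightarrow> signal ini = 0"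
    using valid_ini valid_state_signal_eq_0 by blast
  ultimately show ?thesis using assms(2,3) ini'_fields(4) by auto
qed

lemma leader_D_eq: "\<not> at_res p \<Longrightarrow> leader (ag n D p) = leader (ag n C p)"
  by (simp add: ag_D ag_C_ini ini'_fields)

lemma leader_D_imp: "leader (ag n D p) = 1 \<Longrightarrow> leader (ag n C p) = 1"
  using leader_D_eq ag_D_res ag_C_res leader_res'_imp by (cases "at_res p") auto

lemma leaders_unchanged:
  "leader res \<noteq> 1 \<Longrightarrow> leader (ag n D q) = 1 \<longleftrightarrow> leader (ag n C q) = 1"
  using leader_D_eq ag_D_res ag_C_res leader_res'_follower by (cases "at_res q") auto

context
  fixes k assumes modest_k: "modest n C k"
begin

lemma leader_D_segment:
  assumes j: "j \<le> distL n C k"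
  shows "leader (ag n D (k - int j)) = leader (ag n C (k - int j))"
proof (cases "at_res (k - int j)")
  case False
  then show ?thesis by (rule leader_D_eq)
next
  case True
  have "leader res' = leader res"
  proof (cases "j < distL n C k")
    case True
    then have "leader res \<noteq> 1"
      using not_leader_below_distL ag_C_res[OF \<open>at_res (k - int j)\<close>] by metis
    then show ?thesis by (rule leader_res'_follower)
  next
    case False
    then have "j = distL n C k" using j by simp
    then have "signal res = 0" "shield res = 1"
      using modest_signal[OF modest_k j] modest_shield[OF modest_k] ag_C_res[OF True] by simp_all
    then show ?thesis using res'_fields(1) by simp
  qed
  then show ?thesis using ag_D_res[OF True] ag_C_res[OF True] by simp
qed

lemma distL_D_segment:
  assumes j: "j \<le> distL n C k"
  shows "distL n D (k - int j) = distL n C k - j"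
proof (rule distL_eqI)
  have "leader (ag n D (k - int (distL n C k))) = 1"
    using leader_D_segment[of "distL n C k"] leader_at_distL[OF has_leader_C] by simp
  then show "leader (ag n D (k - int j - int (distL n C k - j))) = 1"
    using j by (simp add: of_nat_diff)
  fix i assume "i < distL n C k - j"
  then have "j + i < distL n C k" by simp
  then have "leader (ag n D (k - int (j + i))) \<noteq> 1"
    using leader_D_segment[of "j + i"] not_leader_below_distL[of "j + i"] by simp
  then show "leader (ag n D (k - int j - int i)) \<noteq> 1" by (simp add: algebra_simps)
qed

lemma shield_D_segment: "shield (ag n D (k - int (distL n C k))) = 1"
proof -
  let ?p = "k - int (distL n C k)"
  have "shield (ag n C ?p) = 1" using modest_shield[OF modest_k] .
  moreover have "signal (ag n C ?p) = 0" using modest_signal[OF modest_k, of "distL n C k"] by simp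
  ultimately show ?thesis
    using ini'_fields(3) res'_fields(4) by (auto simp: ag_D ag_C_ini ag_C_res)
qed

lemma signal_D_segment:
  assumes j: "j \<le> distL n C k" and signal_ini': "at_ini k \<Longrightarrow> signal ini' = 0"
  shows "signal (ag n D (k - int j)) = 0"
proof -
  let ?p = "k - int j"
  have signal_C: "signal (ag n C ?p) = 0" using modest_signal[OF modest_k j] .
  consider (ini) "at_ini ?p" | (res) "at_res ?p" | (other) "\<not> at_ini ?p" "\<not> at_res ?p" by blast
  then show ?thesis
  proof cases
    case ini
    show ?thesis
    proof (cases j)
      case 0
      then show ?thesis using ini signal_ini' ag_D_ini by simp
    next
      case (Suc i)
      then have res_i: "at_res (k - int i)" using at_res_succ[OF ini] by (simp add: algebra_simps)
      have "i < distL n C k" using Suc j by simp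
      then have res_follower: "leader res \<noteq> 1"
        using not_leader_below_distL[of i n C k] ag_C_res[OF res_i] by metis
      have "signal res = 0"
        using modest_signal[OF modest_k, of i] \<open>i < distL n C k\<close> ag_C_res[OF res_i] by simp
      then have "signal res' = 0" using res'_fields(5) by simp
      moreover have "signal ini = 0" using signal_C ag_C_ini[OF ini] by simp
      ultimately show ?thesis using signal_ini'_zero res_follower ag_D_ini[OF ini] by simp
    qed
  next
    case res
    then show ?thesis using signal_C ag_C_res ag_D_res res'_fields(5) by simp
  next
    case other
    then show ?thesis using signal_C ag_D_other by simp
  qed
qed

lemma dist_D_segment:
  assumes j: "j \<le> distL n C k"
  shows "dist (ag n D (k - int j)) \<le> distL n C k - j"
proof -
  let ?p = "k - int j"
  have dist_C: "dist (ag n C ?p) \<le> distL n C k - j" using modest_dist[OF modest_k has_leader_C j] .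
  show ?thesis
  proof (cases "at_res ?p \<and> leader res \<noteq> 1")
    case False
    then have "dist (ag n D ?p) \<le> dist (ag n C ?p)"
      using ini'_fields(2) res'_fields(2) by (auto simp: ag_D ag_C_ini ag_C_res responder_dist_def)
    then show ?thesis using dist_C by simp
  next
    case True
    then have res_at: "ag n C ?p = res" and res_follower: "leader res \<noteq> 1" using ag_C_res by auto
    have "j \<noteq> distL n C k" using leader_at_distL[OF has_leader_C, of k] res_at res_follower by auto
    then have j1: "j + 1 \<le> distL n C k" using j by simp
    have "?p - 1 = k - int (j + 1)" by simp
    then have "at_ini (k - int (j + 1))" using at_ini_pred[of ?p] True by metis
    then have "dist ini \<le> distL n C k - (j + 1)"
      using modest_dist[OF modest_k has_leader_C j1] ag_C_ini by simp
    then have "responder_dist N ini res \<le> distL n C k - j"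
      using dist_C res_at res_follower j1 by (auto simp: responder_dist_def)
    then show ?thesis using res'_fields(2) ag_D_res True by simp
  qed
qed

lemma modest_D_segment:
  assumes "at_ini k \<Longrightarrow> signal ini' = 0"
  shows "modest n D k"
  unfolding modest_def peaceful_def
  using distL_D_segment[of 0] distL_D_segment shield_D_segment signal_D_segment[OF _ assms]
    dist_D_segment by simp

end

lemma has_leader_D: "has_leader n D"
proof -
  obtain p where p: "leader (ag n C p) = 1" using leader_at_distL[OF has_leader_C] by blast
  show ?thesis
  proof (cases "at_res p \<and> leader res' \<noteq> 1")
    case False
    then have "leader (ag n D p) = 1" using p leader_D_eq ag_D_res by (cases "at_res p") auto
    then show ?thesis by (rule has_leaderI[OF n_pos])
  next
    case True
    then have "fired_bullet ini = 2" using p ag_C_res fired_if_killed by auto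
    then consider "leader ini = 1" | "bullet ini = 2" using fired_bullet_2 by blast
    then show ?thesis
    proof cases
      case 1
      then have "leader (ag n D (int a)) = 1" using ag_D_ini[OF at_ini_a] ini'_fields(1) by simp
      then show ?thesis by (rule has_leaderI[OF n_pos])
    next
      case 2
      then have m: "modest n C (int a)" using modest_C ag_C_ini[OF at_ini_a] by simp
      have "leader (ag n D (int a - int (distL n C (int a)))) = 1"
        using leader_D_segment[OF m, of "distL n C (int a)"] leader_at_distL[OF has_leader_C] by simp
      then show ?thesis by (rule has_leaderI[OF n_pos])
    qed
  qed
qed

lemma secure_D_leader: "leader (ag n D p) = 1 \<Longrightarrow> dist (ag n D p) = 0"
proof -
  assume "leader (ag n D p) = 1"
  then have leader_C: "leader (ag n C p) = 1" by (rule leader_D_imp)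
  consider "at_ini p" | "at_res p" | "\<not> at_ini p" "\<not> at_res p" by blast
  then show ?thesis
  proof cases
    case 1
    then show ?thesis using leader_C ag_C_ini ag_D_ini ini'_fields(2) by simp
  next
    case 2
    then show ?thesis using leader_C ag_C_res ag_D_res res'_fields(2) by (simp add: responder_dist_def)
  next
    case 3
    then show ?thesis using leader_C ag_D_other secure_leader[OF secure_C] by simp
  qed
qed

lemma secure_D_res:
  assumes p: "at_res p"
  shows "dist (ag n D p) + distR n D p \<le> N"
proof (cases "leader res = 1")
  case True
  then have "dist (ag n D p) = 0" using ag_D_res[OF p] res'_fields(2) by (simp add: responder_dist_def)
  then show ?thesis using distR_less[OF has_leader_D, of p] n_le_N by simp
next
  case res_follower: False
  have res_at: "ag n C p = res" using ag_C_res[OF p] .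
  have "leader (ag n C p) = 0" using res_at res_follower valid_res valid_state_leader_eq_0 by simp
  then have res_secure: "dist res + distR n C p \<le> N" using secure_follower[OF secure_C] res_at by metis
  have "responder_dist N ini res + distR n C p \<le> N"
  proof (cases "bullet res = 0 \<and> leader ini \<noteq> 1")
    case False
    then show ?thesis using res_secure distR_less[OF has_leader_C, of p] n_le_N res_follower
      by (auto simp: responder_dist_def)
  next
    case True
    have ini_at: "ag n C (p - 1) = ini" using ag_C_ini[OF at_ini_pred[OF p]] .
    have "leader (ag n C (p - 1)) = 0" using ini_at True valid_ini valid_state_leader_eq_0 by simp
    then have "dist ini + distR n C (p - 1) \<le> N" using secure_follower[OF secure_C] ini_at by metis
    moreover have "distR n C (p - 1) = Suc (distR n C p)"
      using distR_Suc[OF has_leader_C, of "p - 1"] ini_at True by simp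
    ultimately show ?thesis using True res_follower by (auto simp: responder_dist_def)
  qed
  moreover have "distR n D p = distR n C p"
    using distR_cong_leaders[OF leaders_unchanged[OF res_follower]] by simp
  ultimately show ?thesis using ag_D_res[OF p] res'_fields(2) by simp
qed

text \<open>A follower whose nearest leader to the right is shot lies in the segment behind the
  killing bullet, so modesty bounds its dist by its distance from the leader that survives
  behind it, and that leader is reached going right once around the ring.\<close>

lemma secure_D_kill:
  assumes p: "\<not> at_res p" "leader (ag n C p) \<noteq> 1"
    and killed: "at_res (p + int (distR n C p))" "leader res' \<noteq> 1"
  shows "dist (ag n C p) + distR n D p \<le> n"
proof -
  define d where "d = distR n C p"
  have "leader res = 1" using leader_at_distR[OF has_leader_C, of p] ag_C_res[OF killed(1)] by simp
  then have fired: "fired_bullet ini = 2" using fired_if_killed killed(2) by blast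
  have "d \<noteq> 0"
  proof
    assume "d = 0"
    then have "distR n C p = 0" using d_def by simp
    then show False using p(1) killed(1) by simp
  qed
  define q where "q = p + int (d - 1)"
  have q_ini: "at_ini q" using at_ini_pred[OF killed(1)] \<open>d \<noteq> 0\<close>
    by (simp add: q_def d_def[symmetric] of_nat_diff algebra_simps)
  have "leader (ag n C q) \<noteq> 1"
    using not_leader_below_distR[of "d - 1" n C p] \<open>d \<noteq> 0\<close> by (simp add: q_def d_def)
  then have "bullet ini = 2" using fired fired_bullet_2 ag_C_ini[OF q_ini] by auto
  then have m: "modest n C q" using modest_C ag_C_ini[OF q_ini] by simp
  define e where "e = distL n C q"
  have "d \<le> e"
    using distR_le_distL_before_leader[OF has_leader_C] by (simp add: d_def e_def q_def)
  have "q - int (d - 1) = p" by (simp add: q_def)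
  then have dist_p: "dist (ag n C p) \<le> e - (d - 1)"
    using modest_dist[OF m has_leader_C, of "d - 1"] \<open>d \<le> e\<close> e_def by simp
  have e_less: "e < n" using distL_less[OF has_leader_C] e_def by simp
  have "leader (ag n D (q - int e)) = 1"
    using leader_D_segment[OF m, of e] leader_at_distL[OF has_leader_C, of q] e_def by simp
  moreover have "p + int (n - (e - (d - 1))) = q - int e + int n"
    using \<open>d \<noteq> 0\<close> \<open>d \<le> e\<close> e_less by (simp add: q_def of_nat_diff)
  then have "ag n D (p + int (n - (e - (d - 1)))) = ag n D (q - int e)"
    by (intro ag_mod_cong) simp
  ultimately have "distR n D p \<le> n - (e - (d - 1))" using distR_le by metis
  then show ?thesis using dist_p \<open>d \<le> e\<close> e_less by linarith
qed

lemma secure_D_follower: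
  assumes p: "\<not> at_res p" and follower: "leader (ag n D p) \<noteq> 1"
  shows "dist (ag n D p) + distR n D p \<le> N"
proof -
  have follower_C: "leader (ag n C p) \<noteq> 1" using follower leader_D_eq[OF p] by simp
  then have "leader (ag n C p) = 0" using valid_C valid_state_leader_eq_0 by blast
  then have secure_p: "dist (ag n C p) + distR n C p \<le> N" using secure_follower[OF secure_C] by blast
  have dist_le: "dist (ag n D p) \<le> dist (ag n C p)" using p ini'_fields(2) by (auto simp: ag_D ag_C_ini)
  show ?thesis
  proof (cases "leader (ag n D (p + int (distR n C p))) = 1")
    case True
    then have "distR n D p \<le> distR n C p" by (rule distR_le)
    then show ?thesis using secure_p dist_le by simp
  next
    case False
    have "leader (ag n C (p + int (distR n C p))) = 1" using leader_at_distR[OF has_leader_C] .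
    then have killed: "at_res (p + int (distR n C p))" using False leader_D_eq by metis
    then have "leader res' \<noteq> 1" using False ag_D_res by metis
    then show ?thesis using secure_D_kill[OF p follower_C killed] dist_le n_le_N by linarith
  qed
qed

lemma secure_D: "secure n N D p"
  unfolding secure_def
proof (intro conjI impI)
  assume "leader (ag n D p) = 1"
  then show "dist (ag n D p) = 0" by (rule secure_D_leader)
next
  assume "leader (ag n D p) = 0"
  then have "dist (ag n D p) + distR n D p \<le> N"
    using secure_D_res secure_D_follower by (cases "at_res p") auto
  then show "int (dist (ag n D p)) \<le> int N - int (distR n D p)" by linarith
qed

lemma modest_D_ini:
  assumes fired: "fired_bullet ini = 2" and res_follower: "leader res \<noteq> 1"
  shows "modest n D (int a)"
proof -
  have "signal res' = 0" using res'_fields(5) res_follower fired by simp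
  note signal_ini' = signal_ini'_zero[OF res_follower this]
  have ini_at: "ag n C (int a) = ini" using ag_C_ini[OF at_ini_a] .
  show ?thesis
  proof (cases "leader ini = 1")
    case True
    have "shield ini' = 1"
    proof (cases "signal ini = 1")
      case True
      then show ?thesis using \<open>leader ini = 1\<close> ini'_fields(3) by simp
    next
      case False
      then have "bullet ini = 2" using fired by (simp add: fired_bullet_def)
      then have "modest n C (int a)" using modest_C ini_at by simp
      then have "shield ini = 1" using modest_at_leader[of n C "int a"] ini_at True by simp
      then show ?thesis using ini'_fields(3) False by simp
    qed
    moreover have "signal ini' = 0" using signal_ini' True by simp
    moreover have "dist ini' = 0" using ini'_fields(2) True by simp
    moreover have "leader (ag n D (int a)) = 1" using ag_D_ini[OF at_ini_a] ini'_fields(1) True by simp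
    ultimately show ?thesis using modest_at_leader[of n D "int a"] ag_D_ini[OF at_ini_a] by simp
  next
    case False
    then have "bullet ini = 2" using fired by (simp add: fired_bullet_def)
    then have m: "modest n C (int a)" using modest_C ini_at by simp
    then have "signal ini = 0" using modest_signal[OF m, of 0] ini_at by simp
    then show ?thesis using modest_D_segment[OF m] signal_ini' by blast
  qed
qed

text \<open>A bullet that has just moved from the initiator to the responder extends the segment
  behind it by one agent.\<close>

lemma modest_D:
  assumes bullet_2: "bullet (ag n D k) = 2"
  shows "modest n D k"
proof (cases "at_res k")
  case False
  have "\<not> at_ini k" using bullet_2 ag_D_ini bullet_ini' by auto
  then have "modest n C k" using modest_C bullet_2 ag_D_other[OF _ False] by simp
  then show ?thesis using modest_D_segment \<open>\<not> at_ini k\<close> by blast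
next
  case True
  have not_ini: "\<not> at_ini k" using True not_at_ini_and_res by blast
  have bullet_res': "bullet res' = 2" using bullet_2 ag_D_res[OF True] by simp
  show ?thesis
  proof (cases "bullet res = 2")
    case True
    then have "modest n C k" using modest_C ag_C_res[OF \<open>at_res k\<close>] by simp
    then show ?thesis using modest_D_segment not_ini by blast
  next
    case False
    then have res_follower: "leader res \<noteq> 1" and "bullet res = 0" and fired: "fired_bullet ini = 2"
      using bullet_res' res'_fields(3) by (auto split: if_splits)
    have pred_ini: "at_ini (k - 1)" using at_ini_pred[OF \<open>at_res k\<close>] .
    then have "(k - 1) mod int n = int a mod int n" using at_ini_a by (simp add: at_ini_def)
    then have m: "modest n D (k - 1)" using modest_D_ini[OF fired res_follower] modest_mod_cong by blast
    have "dist ini' \<le> distL n D (k - 1)"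
      using modest_dist[OF m has_leader_D, of 0] ag_D_ini[OF pred_ini] by simp
    then have "dist res' \<le> distL n D (k - 1) + 1"
      using res'_fields(2) ini'_fields(2) res_follower \<open>bullet res = 0\<close> by (simp add: responder_dist_def)
    moreover have "leader res' \<noteq> 1" using leader_res'_follower res_follower by simp
    moreover have "signal res' = 0" using res'_fields(5) fired by simp
    ultimately show ?thesis using modest_extend[OF has_leader_D m] ag_D_res[OF \<open>at_res k\<close>] by simp
  qed
qed

lemma valid_D: "valid_config n N D"
  unfolding valid_config_def using valid_state_ag_D ag_of_nat by metis

lemma ni_invariant_D: "ni_invariant n N D"
  unfolding ni_invariant_def using valid_D has_leader_D secure_D modest_D by blast

lemma follower_stays: "i < n \<Longrightarrow> leader (C i) = 0 \<Longrightarrow> leader (D i) = 0"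
proof -
  assume i: "i < n" and "leader (C i) = 0"
  then have "leader (D i) \<noteq> 1" using leader_D_imp[of "int i"] ag_of_nat[OF i] by force
  then show ?thesis using valid_state_ag_D[of "int i"] ag_of_nat[OF i] valid_state_leader_eq_0 by metis
qed

end

section \<open>Reachable configurations\<close>

lemma step_interaction:
  assumes "2 \<le> n" "n \<le> N" "ni_invariant n N C" "step n N C C'"
  obtains a where "interaction n N C a" "C' = interaction.D n N C a"
proof -
  obtain a where a: "a < n" and C': "C' = C(a := fst (prl_trans N (C a) (C (Suc a mod n))),
      Suc a mod n := snd (prl_trans N (C a) (C (Suc a mod n))))"
    using assms(4) unfolding step_def by blast
  interpret interaction n N C a using assms(1-3) a by unfold_locales
  have "C' = D" unfolding C' D_def ini'_def res'_def ini_def res_def b_def ..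
  then show ?thesis using that interaction_axioms by blast
qed

lemma ni_invariant_step:
  "2 \<le> n \<Longrightarrow> n \<le> N \<Longrightarrow> ni_invariant n N C \<Longrightarrow> step n N C C' \<Longrightarrow> ni_invariant n N C'"
  by (metis step_interaction interaction.ni_invariant_D)

lemma step_keeps_followers:
  "2 \<le> n \<Longrightarrow> n \<le> N \<Longrightarrow> ni_invariant n N C \<Longrightarrow> step n N C C' \<Longrightarrow> i < n \<Longrightarrow>
   leader (C i) = 0 \<Longrightarrow> leader (C' i) = 0"
  by (metis step_interaction interaction.follower_stays)

lemma positions_from_residues:
  assumes "0 < n" "\<And>i. i < n \<Longrightarrow> P (int i)" "\<And>k k'. k mod int n = k' mod int n \<Longrightarrow> P k \<Longrightarrow> P k'"
  shows "P k"
proof -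
  have "nat (k mod int n) < n" using assms(1) by (simp add: nat_less_iff)
  then have "P (int (nat (k mod int n)))" by (rule assms(2))
  moreover have "int (nat (k mod int n)) mod int n = k mod int n" using assms(1) by simp
  ultimately show ?thesis using assms(3) by blast
qed

lemma ni_invariant_init:
  assumes "2 \<le> n" "valid_config n N C" "C_NI n N C"
  shows "ni_invariant n N C"
proof -
  have n_pos: "0 < n" using assms(1) by simp
  have "secure n N C k" for k
  proof (rule positions_from_residues[OF n_pos])
    show "secure n N C (int i)" if "i < n" for i using assms(3) that unfolding C_NI_def by blast
    show "secure n N C k2" if "k1 mod int n = k2 mod int n" "secure n N C k1" for k1 k2
      using that secure_mod_cong by blast
  qed
  moreover have "bullet (ag n C k) = 2 \<longrightarrow> modest n C k" for k
  proof (rule positions_from_residues[OF n_pos])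
    show "bullet (ag n C (int i)) = 2 \<longrightarrow> modest n C (int i)" if "i < n" for i
      using assms(3) that ag_of_nat unfolding C_NI_def by metis
    show "bullet (ag n C k2) = 2 \<longrightarrow> modest n C k2"
      if "k1 mod int n = k2 mod int n" "bullet (ag n C k1) = 2 \<longrightarrow> modest n C k1" for k1 k2
      using that ag_mod_cong modest_mod_cong by metis
  qed
  moreover have "has_leader n C" using assms(3) unfolding C_NI_def C_PB_def has_leader_def by blast
  ultimately show ?thesis using assms(2) unfolding ni_invariant_def by blast
qed

theorem lemma7:
  fixes n N :: nat and C0 :: config
  assumes "2 \<le> n" and "n \<le> N"
    and "valid_config n N C0"
    and "C_NI n N C0"
  shows "\<forall>D D'. reachable n N C0 D \<longrightarrow> step n N D D' \<longrightarrow>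
           (\<forall>i<n. leader (D i) = 0 \<longrightarrow> leader (D' i) = 0)"
proof (intro allI impI)
  fix D D' i
  assume reach: "reachable n N C0 D" and D_step: "step n N D D'"
    and "i < n" and "leader (D i) = 0"
  have "ni_invariant n N D" using reach unfolding reachable_def
  proof (induction rule: rtranclp_induct)
    case base
    then show ?case using ni_invariant_init assms by blast
  next
    case (step C C')
    then show ?case using ni_invariant_step assms(1,2) by blast
  qed
  then show "leader (D' i) = 0"
    using step_keeps_followers assms(1,2) D_step \<open>i < n\<close> \<open>leader (D i) = 0\<close> by blast
qed

end
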